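(* Let $P\subseteq S_n$ be a permutation array with ${\rm hd}(P)\ge 4$. Then ${\rm hd}(P^{\sf CT})\le{\rm hd}(P)$.
   Context: $S_n$ is the symmetric group on $\{0,1,\ldots,n-1\}$. A permutation array is a non-empty subset $P\subseteq S_n$; ${\rm hd}(\sigma,\tau)=|\{x:\sigma(x)\neq\tau(x)\}|$ and ${\rm hd}(P)=\min\{{\rm hd}(\sigma,\tau):\sigma,\tau\in P,\ \sigma\neq\tau\}$. The contraction of $\sigma\in S_n$ is $\sigma^{\sf CT}\in S_{n-1}$ (on $\{0,\ldots,n-2\}$) defined by $\sigma^{\sf CT}(x)=\sigma(n-1)$ if $x=\sigma^{-1}(n-1)$ and $\sigma^{\sf CT}(x)=\sigma(x)$ otherwise (i.e. delete $n-1$ from the cycle notation of $\sigma$); $P^{\sf CT}=\{\sigma^{\sf CT}:\sigma\in P\}$. *)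

theory Defs
  imports "HOL-Combinatorics.Permutations"
begin

definition Sym :: "nat \<Rightarrow> (nat \<Rightarrow> nat) set" where
  "Sym n = {\<sigma>. \<sigma> permutes {..<n}}"

definition hd :: "nat \<Rightarrow> (nat \<Rightarrow> nat) \<Rightarrow> (nat \<Rightarrow> nat) \<Rightarrow> nat" where
  "hd n \<sigma> \<tau> = card {x \<in> {..<n}. \<sigma> x \<noteq> \<tau> x}"

text \<open>Minimum distance of a permutation array P in S_n (meaningful when |P| >= 2).\<close>
definition hdP :: "nat \<Rightarrow> (nat \<Rightarrow> nat) set \<Rightarrow> nat" where
  "hdP n P = Min {hd n \<sigma> \<tau> | \<sigma> \<tau>. \<sigma> \<in> P \<and> \<tau> \<in> P \<and> \<sigma> \<noteq> \<tau>}"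

text \<open>Contraction: S_n -> S_(n-1), deleting n-1 from the cycle notation.\<close>
definition contr :: "nat \<Rightarrow> (nat \<Rightarrow> nat) \<Rightarrow> (nat \<Rightarrow> nat)" where
  "contr n \<sigma> = (\<lambda>x. if x < n - 1 then (if \<sigma> x = n - 1 then \<sigma> (n - 1) else \<sigma> x) else x)"

definition contrP :: "nat \<Rightarrow> (nat \<Rightarrow> nat) set \<Rightarrow> (nat \<Rightarrow> nat) set" where
  "contrP n P = contr n ` P"

end

theory Submission
  imports Defs
begin

text \<open>Contraction can only make two permutations \<sigma>, \<tau> differ at a new position x < n - 1 when
  \<sigma> x = \<tau> x = n - 1; then x is the common preimage of n - 1 and \<sigma>, \<tau> differ at n - 1, a position
  that disappears, so the Hamming distance does not grow. Conversely, every position where \<sigma>, \<tau>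
  differ survives contraction unless it is n - 1 or a preimage of n - 1, so the distance drops by
  at most 3. Hence if hd(P) \<ge> 4, a pair attaining hd(P) stays a pair of distinct permutations
  in the contraction, at distance at most hd(P).\<close>

lemma permutes_eq_iff_eq_inv:
  assumes "s permutes A"
  shows "s x = y \<longleftrightarrow> x = inv s y"
  using assms by (metis permutes_inverses)

lemma hd_contr_le:
  assumes s: "s permutes {..<n}" and t: "t permutes {..<n}"
  shows "hd (n - 1) (contr n s) (contr n t) \<le> hd n s t"
proof -
  let ?D = "{x \<in> {..<n}. s x \<noteq> t x}"
  let ?D' = "{x \<in> {..<n - 1}. contr n s x \<noteq> contr n t x}"
  have new_diff: "s x = n - 1 \<and> s (n - 1) \<noteq> t (n - 1)" if "x \<in> ?D'" "s x = t x" for x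
    using that unfolding contr_def by (auto split: if_splits)
  define f where "f x = (if s x = t x then n - 1 else x)" for x
  have "inj_on f ?D'"
  proof (rule inj_onI)
    fix x y assume x: "x \<in> ?D'" and y: "y \<in> ?D'" and "f x = f y"
    have "x < n - 1" "y < n - 1"
      using x y by simp_all
    show "x = y"
    proof (cases "s x = t x")
      case True
      then have "s y = t y"
        using \<open>f x = f y\<close> \<open>y < n - 1\<close> unfolding f_def by (metis less_irrefl)
      then have "s x = s y"
        using True new_diff[OF x] new_diff[OF y] by simp
      then show ?thesis
        using permutes_inj[OF s] by (simp add: inj_eq)
    next
      case False
      then have "s y \<noteq> t y"
        using \<open>f x = f y\<close> \<open>x < n - 1\<close> unfolding f_def by (metis less_irrefl)
      then show ?thesis
        using False \<open>f x = f y\<close> unfolding f_def by simp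
    qed
  qed
  moreover have "f x \<in> ?D" if x: "x \<in> ?D'" for x
  proof (cases "s x = t x")
    case True
    then show ?thesis
      using new_diff[OF x] x unfolding f_def by auto
  next
    case False
    then show ?thesis
      using x unfolding f_def by auto
  qed
  ultimately have "card ?D' \<le> card ?D"
    by (intro card_inj_on_le) (blast, blast, simp)
  then show ?thesis
    unfolding hd_def .
qed

lemma hd_contr_ge:
  assumes s: "s permutes {..<n}" and t: "t permutes {..<n}"
  shows "hd n s t - 3 \<le> hd (n - 1) (contr n s) (contr n t)"
proof -
  let ?D = "{x \<in> {..<n}. s x \<noteq> t x}"
  let ?D' = "{x \<in> {..<n - 1}. contr n s x \<noteq> contr n t x}"
  let ?lost = "{n - 1, inv s (n - 1), inv t (n - 1)}"
  have "?D - ?lost \<subseteq> ?D'"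
    using permutes_eq_iff_eq_inv[OF s] permutes_eq_iff_eq_inv[OF t]
    by (auto simp: contr_def)
  have "card ?lost \<le> 3"
    by (simp add: card_insert_if)
  then have "card ?D - 3 \<le> card ?D - card ?lost"
    by linarith
  also have "\<dots> \<le> card (?D - ?lost)"
    by (rule diff_card_le_card_Diff) simp
  also have "\<dots> \<le> card ?D'"
    using \<open>?D - ?lost \<subseteq> ?D'\<close> by (intro card_mono) auto
  finally show ?thesis
    unfolding hd_def .
qed

lemma finite_hd_values:
  assumes "finite P"
  shows "finite {hd n \<sigma> \<tau> | \<sigma> \<tau>. \<sigma> \<in> P \<and> \<tau> \<in> P \<and> \<sigma> \<noteq> \<tau>}"
proof (rule finite_subset)
  show "{hd n \<sigma> \<tau> | \<sigma> \<tau>. \<sigma> \<in> P \<and> \<tau> \<in> P \<and> \<sigma> \<noteq> \<tau>} \<subseteq> (\<lambda>(\<sigma>, \<tau>). hd n \<sigma> \<tau>) ` (P \<times> P)"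
    by auto
qed (use assms in simp)

lemma hdP_le_hd:
  assumes "finite P" "\<sigma> \<in> P" "\<tau> \<in> P" "\<sigma> \<noteq> \<tau>"
  shows "hdP n P \<le> hd n \<sigma> \<tau>"
  unfolding hdP_def using assms finite_hd_values[OF \<open>finite P\<close>] by (intro Min_le) auto

lemma hdP_attained:
  assumes "card P \<ge> 2"
  obtains \<sigma> \<tau> where "\<sigma> \<in> P" "\<tau> \<in> P" "\<sigma> \<noteq> \<tau>" "hd n \<sigma> \<tau> = hdP n P"
proof -
  have "finite P"
    using assms card.infinite by fastforce
  moreover have "\<exists>\<sigma>\<in>P. \<exists>\<tau>\<in>P. \<sigma> \<noteq> \<tau>"
    using assms card_le_Suc0_iff_eq[OF \<open>finite P\<close>] by fastforce
  ultimately have "hdP n P \<in> {hd n \<sigma> \<tau> | \<sigma> \<tau>. \<sigma> \<in> P \<and> \<tau> \<in> P \<and> \<sigma> \<noteq> \<tau>}"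
    unfolding hdP_def by (intro Min_in finite_hd_values) auto
  then show ?thesis
    using that by auto
qed

theorem corollary3p4:
  fixes n :: nat and P :: "(nat \<Rightarrow> nat) set"
  assumes "P \<subseteq> Sym n"
    and "card P \<ge> 2"
    and "hdP n P \<ge> 4"
  shows "hdP (n - 1) (contrP n P) \<le> hdP n P"
proof -
  obtain \<sigma> \<tau> where \<sigma>\<tau>: "\<sigma> \<in> P" "\<tau> \<in> P" "\<sigma> \<noteq> \<tau>" and min: "hd n \<sigma> \<tau> = hdP n P"
    using hdP_attained[OF assms(2)] by blast
  have perm: "\<sigma> permutes {..<n}" "\<tau> permutes {..<n}"
    using \<sigma>\<tau> assms(1) unfolding Sym_def by auto
  have "1 \<le> hd (n - 1) (contr n \<sigma>) (contr n \<tau>)"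
    using hd_contr_ge[OF perm] min assms(3) by linarith
  then have "contr n \<sigma> \<noteq> contr n \<tau>"
    unfolding hd_def by auto
  moreover have "finite (contrP n P)"
    using assms(2) card.infinite unfolding contrP_def by fastforce
  ultimately have "hdP (n - 1) (contrP n P) \<le> hd (n - 1) (contr n \<sigma>) (contr n \<tau>)"
    using \<sigma>\<tau> unfolding contrP_def by (intro hdP_le_hd) auto
  also have "\<dots> \<le> hdP n P"
    using hd_contr_le[OF perm] min by simp
  finally show ?thesis .
qed

end
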